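(* Let $G$ be a group, $g,h,c\in G$, and $k=|G:C_G(h)|$, assumed finite. If the set $\{x\in G:[x,g,h]=c\}$ is $2k$-large in $G$, then $[a,g,h]=1$ for all $a\in G$. Similarly, if $c\in Z(G)$ and the set $\{x\in G:[g,x,h]=c\}$ is $2k$-large in $G$, then $[g,a,h]=1$ for all $a\in G$.
   Context: $[a,b]=a^{-1}b^{-1}ab$ and $[a,b,d]=[[a,b],d]$. A subset $X\subseteq G$ is $k$-large in $G$ if the intersection of any $k$ left translates $a_1X\cap\dots\cap a_kX$ ($a_i\in G$) is non-empty. *)

theory Defs
  imports "HOL-Algebra.Algebra"
begin

definition comm :: "('a, 'b) monoid_scheme \<Rightarrow> 'a \<Rightarrow> 'a \<Rightarrow> 'a" where
  "comm G a b = inv\<^bsub>G\<^esub> a \<otimes>\<^bsub>G\<^esub> inv\<^bsub>G\<^esub> b \<otimes>\<^bsub>G\<^esub> a \<otimes>\<^bsub>G\<^esub> b"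

definition comm3 :: "('a, 'b) monoid_scheme \<Rightarrow> 'a \<Rightarrow> 'a \<Rightarrow> 'a \<Rightarrow> 'a" where
  "comm3 G a b d = comm G (comm G a b) d"

definition centralizer :: "('a, 'b) monoid_scheme \<Rightarrow> 'a \<Rightarrow> 'a set" where
  "centralizer G h = {x \<in> carrier G. x \<otimes>\<^bsub>G\<^esub> h = h \<otimes>\<^bsub>G\<^esub> x}"

definition center :: "('a, 'b) monoid_scheme \<Rightarrow> 'a set" where
  "center G = {z \<in> carrier G. \<forall>y \<in> carrier G. z \<otimes>\<^bsub>G\<^esub> y = y \<otimes>\<^bsub>G\<^esub> z}"

definition large :: "('a, 'b) monoid_scheme \<Rightarrow> nat \<Rightarrow> 'a set \<Rightarrow> bool" where
  "large G k S \<longleftrightarrow>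
     (\<forall>a. (\<forall>i<k. a i \<in> carrier G) \<longrightarrow> \<Inter>((\<lambda>i. l_coset G (a i) S) ` lessThan k) \<noteq> {})"

end

theory Submission
  imports Defs
begin

text \<open>
  Put \<open>H = C\<^sub>G(h)\<close>; then \<open>[y,h] = 1\<close> iff \<open>y \<in> H\<close>, and \<open>[y\<^sub>1,h] = [y\<^sub>2,h]\<close> forces
  \<open>y\<^sub>2y\<^sub>1\<^sup>-\<^sup>1 \<in> H\<close>. A \<open>k\<close>-large set \<open>S\<close> meets every subgroup of index \<open>k\<close>: if the \<open>r\<^sub>i\<close>
  represent the right cosets of \<open>H\<close> and \<open>z \<in> \<Inter>\<^sub>i r\<^sub>i\<^sup>-\<^sup>1S\<close>, then \<open>r\<^sub>jz \<in> H \<inter> S\<close> for the \<open>j\<close>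
  with \<open>z\<^sup>-\<^sup>1 \<in> Hr\<^sub>j\<close>. If \<open>S\<close> is \<open>2k\<close>-large, \<open>S \<inter> a\<^sup>-\<^sup>1S\<close> is \<open>k\<close>-large, so some \<open>p \<in> H\<close> has
  \<open>p, ap \<in> S\<close>, i.e. \<open>[p,g,h] = [ap,g,h]\<close>. As \<open>[ap,g] = p\<^sup>-\<^sup>1[a,g]p[p,g]\<close>, this puts
  \<open>p\<^sup>-\<^sup>1[a,g]p\<close>, hence \<open>[a,g]\<close>, into \<open>H\<close>: \<open>[a,g,h] = 1\<close>. For the second statement,
  \<open>[g,x] = [x,g]\<^sup>-\<^sup>1\<close> and the centrality of \<open>c\<close> give \<open>[g,x,h] = c\<close> iff \<open>[x,g,h] = c\<^sup>-\<^sup>1\<close>.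
\<close>

lemma largeD:
  assumes "large G k S" "\<And>i. i < k \<Longrightarrow> a i \<in> carrier G"
  shows "\<exists>z. \<forall>i<k. z \<in> l_coset G (a i) S"
proof -
  have "\<Inter> ((\<lambda>i. l_coset G (a i) S) ` {..<k}) \<noteq> {}"
    using assms unfolding large_def by blast
  then show ?thesis
    by (auto simp: ex_in_conv[symmetric])
qed

context group
begin

lemma mult_inv_cancel_left [simp]: "x \<in> carrier G \<Longrightarrow> y \<in> carrier G \<Longrightarrow> x \<otimes> (inv x \<otimes> y) = y"
  by (simp flip: m_assoc)

lemma inv_mult_cancel_left [simp]: "x \<in> carrier G \<Longrightarrow> y \<in> carrier G \<Longrightarrow> inv x \<otimes> (x \<otimes> y) = y"
  by (simp flip: m_assoc)

lemma comm_closed [simp]: "x \<in> carrier G \<Longrightarrow> y \<in> carrier G \<Longrightarrow> comm G x y \<in> carrier G"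
  by (simp add: comm_def)

lemma comm_swap_eq_inv: "x \<in> carrier G \<Longrightarrow> y \<in> carrier G \<Longrightarrow> comm G y x = inv (comm G x y)"
  by (simp add: comm_def inv_mult_group m_assoc)

lemma comm_mult_left:
  "x \<in> carrier G \<Longrightarrow> p \<in> carrier G \<Longrightarrow> g \<in> carrier G \<Longrightarrow>
   comm G (x \<otimes> p) g = inv p \<otimes> comm G x g \<otimes> p \<otimes> comm G p g"
  by (simp add: comm_def inv_mult_group m_assoc)

lemma comm_inv_left:
  "y \<in> carrier G \<Longrightarrow> h \<in> carrier G \<Longrightarrow> comm G (inv y) h = y \<otimes> inv (comm G y h) \<otimes> inv y"
  by (simp add: comm_def inv_mult_group m_assoc)

lemma subgroup_centralizer: "h \<in> carrier G \<Longrightarrow> subgroup (centralizer G h) G"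
proof (rule subgroupI)
  assume h: "h \<in> carrier G"
  show "centralizer G h \<subseteq> carrier G" "centralizer G h \<noteq> {}"
    using h by (auto simp: centralizer_def)
  fix a b assume "a \<in> centralizer G h" "b \<in> centralizer G h"
  then have a: "a \<in> carrier G" "a \<otimes> h = h \<otimes> a" and b: "b \<in> carrier G" "b \<otimes> h = h \<otimes> b"
    by (auto simp: centralizer_def)
  have "inv a \<otimes> h = inv a \<otimes> (h \<otimes> a) \<otimes> inv a"
    using a h by (simp add: m_assoc)
  also have "\<dots> = h \<otimes> inv a"
    using a h by (simp flip: a(2) add: m_assoc)
  finally show "inv a \<in> centralizer G h"
    using a by (simp add: centralizer_def)
  have "a \<otimes> b \<otimes> h = a \<otimes> (h \<otimes> b)"
    using a b h by (simp add: m_assoc flip: b(2))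
  also have "\<dots> = h \<otimes> (a \<otimes> b)"
    using a b h by (simp add: a(2) flip: m_assoc)
  finally show "a \<otimes> b \<in> centralizer G h"
    using a b by (simp add: centralizer_def)
qed

lemma comm_eq_one_iff_centralizer:
  assumes "y \<in> carrier G" "h \<in> carrier G"
  shows "comm G y h = \<one> \<longleftrightarrow> y \<in> centralizer G h"
proof -
  have "comm G y h = inv (h \<otimes> y) \<otimes> (y \<otimes> h)"
    using assms by (simp add: comm_def inv_mult_group m_assoc)
  then have "comm G y h = \<one> \<longleftrightarrow> y \<otimes> h = h \<otimes> y"
    using assms by (simp add: inv_solve_left')
  then show ?thesis
    using assms by (auto simp: centralizer_def)
qed

lemma comm_eq_imp_mult_inv_centralizer:
  assumes y: "y\<^sub>1 \<in> carrier G" "y\<^sub>2 \<in> carrier G" and h: "h \<in> carrier G"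
    and eq: "comm G y\<^sub>1 h = comm G y\<^sub>2 h"
  shows "y\<^sub>2 \<otimes> inv y\<^sub>1 \<in> centralizer G h"
proof -
  have conj: "inv y\<^sub>1 \<otimes> inv h \<otimes> y\<^sub>1 = inv y\<^sub>2 \<otimes> inv h \<otimes> y\<^sub>2"
    using eq y h unfolding comm_def by (metis inv_closed m_closed right_cancel)
  define w where "w = y\<^sub>2 \<otimes> inv y\<^sub>1"
  have w: "w \<in> carrier G"
    using y by (simp add: w_def)
  have "w \<otimes> inv h = y\<^sub>2 \<otimes> (inv y\<^sub>1 \<otimes> inv h \<otimes> y\<^sub>1) \<otimes> inv y\<^sub>1"
    using y h by (simp add: w_def m_assoc)
  also have "\<dots> = inv h \<otimes> w"
    using y h by (simp add: conj w_def m_assoc)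
  finally have "h \<otimes> (w \<otimes> inv h) \<otimes> h = h \<otimes> (inv h \<otimes> w) \<otimes> h"
    by simp
  then have "h \<otimes> w = w \<otimes> h"
    using w h by (simp add: m_assoc)
  then show ?thesis
    using w by (simp add: centralizer_def w_def)
qed

lemma comm3_eq_one_if_centralizing_translate:
  assumes carr: "a \<in> carrier G" "g \<in> carrier G" "h \<in> carrier G"
    and p: "p \<in> centralizer G h"
    and eq: "comm3 G p g h = comm3 G (a \<otimes> p) g h"
  shows "comm3 G a g h = \<one>"
proof -
  interpret H: subgroup "centralizer G h" G
    using subgroup_centralizer carr(3) .
  have pc: "p \<in> carrier G"
    using p by simp
  have "comm G (a \<otimes> p) g \<otimes> inv (comm G p g) \<in> centralizer G h"
    using comm_eq_imp_mult_inv_centralizer eq carr pc by (simp add: comm3_def)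
  then have "inv p \<otimes> comm G a g \<otimes> p \<in> centralizer G h"
    using carr pc by (simp add: comm_mult_left m_assoc)
  then have "p \<otimes> (inv p \<otimes> comm G a g \<otimes> p) \<otimes> inv p \<in> centralizer G h"
    using p by simp
  then have "comm G a g \<in> centralizer G h"
    using carr pc by (simp add: m_assoc)
  then show ?thesis
    using carr by (simp add: comm3_def comm_eq_one_iff_centralizer)
qed

lemma conj_eq_central_iff:
  assumes "c \<in> center G" "y \<in> carrier G" "w \<in> carrier G"
  shows "y \<otimes> w \<otimes> inv y = c \<longleftrightarrow> w = c"
proof -
  have "c \<in> carrier G" "c \<otimes> y = y \<otimes> c"
    using assms by (auto simp: center_def)
  then show ?thesis
    using assms by (simp add: inv_solve_right')
qed

lemma comm3_swap_eq_central_iff: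
  assumes "x \<in> carrier G" "g \<in> carrier G" "h \<in> carrier G" and c: "c \<in> center G"
  shows "comm3 G g x h = c \<longleftrightarrow> comm3 G x g h = inv c"
proof -
  have cc: "c \<in> carrier G"
    using c by (simp add: center_def)
  have "comm3 G g x h = comm G x g \<otimes> inv (comm G (comm G x g) h) \<otimes> inv (comm G x g)"
    using assms by (simp add: comm3_def comm_swap_eq_inv[of x g] comm_inv_left)
  then have "comm3 G g x h = c \<longleftrightarrow> inv (comm3 G x g h) = c"
    using assms by (simp add: comm3_def conj_eq_central_iff)
  also have "\<dots> \<longleftrightarrow> comm3 G x g h = inv c"
    using assms cc by (auto simp: comm3_def)
  finally show ?thesis .
qed

lemma comm3_swap_eq_one_iff:
  "x \<in> carrier G \<Longrightarrow> g \<in> carrier G \<Longrightarrow> h \<in> carrier G \<Longrightarrow>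
   comm3 G g x h = \<one> \<longleftrightarrow> comm3 G x g h = \<one>"
  using comm3_swap_eq_central_iff[of x g h \<one>] by (simp add: center_def)

lemma large_double_imp_large_Int_translate:
  assumes large: "large G (2 * k) S" and S: "S \<subseteq> carrier G" and x: "x \<in> carrier G"
  shows "large G k (S \<inter> (l_coset G (inv x) S))"
  unfolding large_def
proof (intro allI impI)
  fix a assume a: "\<forall>i<k. a i \<in> carrier G"
  define b where "b i = (if i < k then a i else a (i - k) \<otimes> inv x)" for i
  have b_carrier: "b i \<in> carrier G" if "i < 2 * k" for i
    using a x that by (simp add: b_def)
  obtain z where z: "\<forall>i<2 * k. z \<in> l_coset G (b i) S"
    using largeD[OF large b_carrier] ..
  have "z \<in> l_coset G (a i) (S \<inter> (l_coset G (inv x) S))" if i: "i < k" for i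
  proof -
    obtain s where s: "s \<in> S" "z = a i \<otimes> s"
      using z[rule_format, of i] i by (auto simp: b_def l_coset_def)
    obtain t where t: "t \<in> S" "z = a i \<otimes> inv x \<otimes> t"
      using z[rule_format, of "i + k"] i by (auto simp: b_def l_coset_def)
    have "s \<in> carrier G" "t \<in> carrier G"
      using s t S by auto
    then have "s = inv x \<otimes> t"
      using s t a i x by (simp add: m_assoc)
    then show ?thesis
      using s t by (auto simp: l_coset_def)
  qed
  then show "\<Inter> ((\<lambda>i. l_coset G (a i) (S \<inter> (l_coset G (inv x) S))) ` {..<k}) \<noteq> {}"
    by blast
qed

lemma large_index_meets_subgroup:
  assumes H: "subgroup H G" and fin: "finite (rcosets H)"
    and large: "large G (card (rcosets H)) S" and S: "S \<subseteq> carrier G"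
  shows "S \<inter> H \<noteq> {}"
proof -
  let ?k = "card (rcosets H)"
  obtain f where f: "bij_betw f {..<?k} (rcosets H)"
    using ex_bij_betw_nat_finite[OF fin] by (auto simp: atLeast0LessThan)
  have "\<exists>r. r \<in> f i" if "i < ?k" for i
    using f that rcos_self[OF _ H] unfolding bij_betw_def RCOSETS_def by blast
  then obtain r where r: "\<And>i. i < ?k \<Longrightarrow> r i \<in> f i"
    by metis
  have r_carrier: "r i \<in> carrier G" if "i < ?k" for i
    using r[OF that] subgroup.rcosets_carrier[OF H is_group] f that
    unfolding bij_betw_def by blast
  have inv_r_carrier: "inv (r i) \<in> carrier G" if "i < ?k" for i
    using r_carrier[OF that] by (rule inv_closed)
  obtain z where z: "\<forall>i<?k. z \<in> l_coset G (inv (r i)) S"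
    using largeD[where a = "\<lambda>i. inv (r i)", OF large inv_r_carrier] ..
  have "H #> \<one> \<in> rcosets H"
    using subgroup.subset[OF H] by (rule rcosetsI) simp
  then have "0 < ?k"
    using fin card_gt_0_iff by blast
  then have zc: "z \<in> carrier G"
    using z l_coset_subset_G[OF S inv_r_carrier] by blast
  have "H #> inv z \<in> rcosets H"
    using subgroup.subset[OF H] by (rule rcosetsI) (simp add: zc)
  then obtain j where j: "j < ?k" "f j = H #> inv z"
    using f unfolding bij_betw_def by (metis imageE lessThan_iff)
  have "r j \<otimes> z \<in> H"
    using r[OF j(1)] j(2) subgroup.rcos_module[OF H is_group] r_carrier[OF j(1)] zc by simp
  moreover have "r j \<otimes> z \<in> S"
    using z[rule_format, OF j(1)] r_carrier[OF j(1)] S by (auto simp: l_coset_def)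
  ultimately show ?thesis
    by blast
qed

lemma comm3_eq_one_if_large:
  assumes g: "g \<in> carrier G" and h: "h \<in> carrier G"
    and fin: "finite (rcosets (centralizer G h))"
    and large: "large G (2 * card (rcosets (centralizer G h))) {x \<in> carrier G. comm3 G x g h = c}"
    and a: "a \<in> carrier G"
  shows "comm3 G a g h = \<one>"
proof -
  let ?S = "{x \<in> carrier G. comm3 G x g h = c}"
  have "large G (card (rcosets (centralizer G h))) (?S \<inter> (l_coset G (inv a) ?S))"
    using large_double_imp_large_Int_translate[OF large _ a] by blast
  then have "?S \<inter> (l_coset G (inv a) ?S) \<inter> centralizer G h \<noteq> {}"
    using large_index_meets_subgroup[OF subgroup_centralizer[OF h] fin] by blast
  then obtain p where p: "p \<in> centralizer G h" "p \<in> ?S" "p \<in> l_coset G (inv a) ?S"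
    by blast
  moreover have "a \<otimes> p \<in> ?S"
    using p(3) a by (auto simp: l_coset_def)
  ultimately show ?thesis
    using comm3_eq_one_if_centralizing_translate[OF a g h p(1)] by simp
qed

end

theorem theorem5p11:
  fixes G :: "('a, 'b) monoid_scheme" and g h c :: 'a and k :: nat
  assumes "group G"
    and "g \<in> carrier G" and "h \<in> carrier G" and "c \<in> carrier G"
    and "finite (rcosets\<^bsub>G\<^esub> (centralizer G h))"
    and "k = card (rcosets\<^bsub>G\<^esub> (centralizer G h))"
  shows "(large G (2 * k) {x \<in> carrier G. comm3 G x g h = c}
            \<longrightarrow> (\<forall>a \<in> carrier G. comm3 G a g h = \<one>\<^bsub>G\<^esub>))
       \<and> (c \<in> center G \<and> large G (2 * k) {x \<in> carrier G. comm3 G g x h = c}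
            \<longrightarrow> (\<forall>a \<in> carrier G. comm3 G g a h = \<one>\<^bsub>G\<^esub>))"
proof (intro conjI impI)
  interpret group G by fact
  note large_imp_commute = comm3_eq_one_if_large[OF assms(2,3,5), folded assms(6)]
  show "large G (2 * k) {x \<in> carrier G. comm3 G x g h = c} \<Longrightarrow>
      \<forall>a \<in> carrier G. comm3 G a g h = \<one>\<^bsub>G\<^esub>"
    using large_imp_commute by blast
  assume "c \<in> center G \<and> large G (2 * k) {x \<in> carrier G. comm3 G g x h = c}"
  then obtain central: "c \<in> center G" and large: "large G (2 * k) {x \<in> carrier G. comm3 G g x h = c}"
    by blast
  have "{x \<in> carrier G. comm3 G g x h = c} = {x \<in> carrier G. comm3 G x g h = inv\<^bsub>G\<^esub> c}"
    using comm3_swap_eq_central_iff[OF _ assms(2,3) central] by blast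
  then have "\<forall>a \<in> carrier G. comm3 G a g h = \<one>\<^bsub>G\<^esub>"
    using large_imp_commute large by simp
  then show "\<forall>a \<in> carrier G. comm3 G g a h = \<one>\<^bsub>G\<^esub>"
    using comm3_swap_eq_one_iff assms(2,3) by blast
qed

end
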